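(* Let $G=(V,E)$ be a finite simple regular graph with $p=|V|$ vertices and $q=|E|$ edges. If $x$ is any easy construction sequence for $G$, then $\nu(x)=\nu^*(G)=q(p+q)$.
   Context: For a finite simple graph $G=(V,E)$ with $p=|V|$, $q=|E|$, put $\ell=p+q$. A construction sequence (c-sequence) for $G$ is a bijection $x:\{1,\dots,\ell\}\to V\sqcup E$ such that for every edge $e=uw$, $x^{-1}(e)>\max\{x^{-1}(u),x^{-1}(w)\}$. The cost of an edge $e=uw$ in $x$ is $\nu(e,x)=(x^{-1}(e)-x^{-1}(u))+(x^{-1}(e)-x^{-1}(w))$, and the cost of $x$ is $\nu(x)=\sum_{e\in E}\nu(e,x)$. $\nu^*(G)$ denotes the maximum of $\nu(x)$ over all c-sequences $x$ for $G$. A c-sequence is easy if no edge precedes a vertex (all vertices are listed first, then all edges). *)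

theory Defs
  imports Main
begin

definition simple_graph :: "'a set \<Rightarrow> 'a set set \<Rightarrow> bool" where
  "simple_graph V E \<longleftrightarrow> finite V \<and> (\<forall>e\<in>E. e \<subseteq> V \<and> card e = 2)"

definition degree :: "'a set set \<Rightarrow> 'a \<Rightarrow> nat" where
  "degree E v = card {e\<in>E. v \<in> e}"

definition regular_graph :: "'a set \<Rightarrow> 'a set set \<Rightarrow> bool" where
  "regular_graph V E \<longleftrightarrow> simple_graph V E \<and> (\<exists>k. \<forall>v\<in>V. degree E v = k)"

definition elems :: "'a set \<Rightarrow> 'a set set \<Rightarrow> ('a + 'a set) set" where
  "elems V E = Inl ` V \<union> Inr ` E"

definition pos :: "'a set \<Rightarrow> 'a set set \<Rightarrow> (nat \<Rightarrow> 'a + 'a set) \<Rightarrow> ('a + 'a set) \<Rightarrow> nat" where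
  "pos V E x y = the_inv_into {1..card V + card E} x y"

definition c_sequence :: "'a set \<Rightarrow> 'a set set \<Rightarrow> (nat \<Rightarrow> 'a + 'a set) \<Rightarrow> bool" where
  "c_sequence V E x \<longleftrightarrow> bij_betw x {1..card V + card E} (elems V E) \<and>
     (\<forall>e\<in>E. \<forall>u\<in>e. pos V E x (Inr e) > pos V E x (Inl u))"

definition edge_cost :: "'a set \<Rightarrow> 'a set set \<Rightarrow> (nat \<Rightarrow> 'a + 'a set) \<Rightarrow> 'a set \<Rightarrow> int" where
  "edge_cost V E x e = (\<Sum>u\<in>e. int (pos V E x (Inr e)) - int (pos V E x (Inl u)))"

definition cost :: "'a set \<Rightarrow> 'a set set \<Rightarrow> (nat \<Rightarrow> 'a + 'a set) \<Rightarrow> int" where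
  "cost V E x = (\<Sum>e\<in>E. edge_cost V E x e)"

definition max_cost :: "'a set \<Rightarrow> 'a set set \<Rightarrow> int" where
  "max_cost V E = Max {cost V E x | x. c_sequence V E x}"

definition easy :: "'a set \<Rightarrow> 'a set set \<Rightarrow> (nat \<Rightarrow> 'a + 'a set) \<Rightarrow> bool" where
  "easy V E x \<longleftrightarrow> (\<forall>v\<in>V. \<forall>e\<in>E. pos V E x (Inl v) < pos V E x (Inr e))"

end

theory Submission
  imports Defs
begin

text \<open>
  In a k-regular graph every vertex is an endpoint of exactly k edges, so for any c-sequence the
  cost is 2 (sum of edge positions) - k (sum of vertex positions), i.e.
  2 (1 + ... + (p + q)) - (k + 2) S, where S is the sum of the vertex positions. The vertex
  positions are p distinct positive integers, so 2 S >= p (p + 1), with equality exactly when the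
  vertices fill the first p places, as in an easy sequence. Using k p = 2 q this reads
  2 cost = 2 q (p + q) - (k + 2) (2 S - p (p + 1)).
\<close>

lemma finite_edges_of_simple_graph:
  assumes "simple_graph V E"
  shows "finite E"
proof -
  have "E \<subseteq> Pow V" using assms by (auto simp: simple_graph_def)
  then show ?thesis using assms finite_subset by (auto simp: simple_graph_def)
qed

lemma sum_sum_edges_eq_sum_degree:
  fixes f :: "'a \<Rightarrow> 'b::comm_semiring_1"
  assumes "finite V" "finite E" "\<forall>e\<in>E. e \<subseteq> V"
  shows "(\<Sum>e\<in>E. \<Sum>u\<in>e. f u) = (\<Sum>v\<in>V. of_nat (degree E v) * f v)"
proof -
  have "(\<Sum>e\<in>E. \<Sum>u\<in>e. f u) = (\<Sum>e\<in>E. \<Sum>v\<in>V. if v \<in> e then f v else 0)"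
  proof (rule sum.cong)
    fix e assume "e \<in> E"
    then have "{v\<in>V. v \<in> e} = e" using assms(3) by auto
    then show "(\<Sum>u\<in>e. f u) = (\<Sum>v\<in>V. if v \<in> e then f v else 0)"
      using sum.inter_filter[OF assms(1), of f "\<lambda>v. v \<in> e"] by simp
  qed simp
  also have "\<dots> = (\<Sum>v\<in>V. \<Sum>e\<in>E. if v \<in> e then f v else 0)"
    by (rule sum.swap)
  also have "\<dots> = (\<Sum>v\<in>V. of_nat (degree E v) * f v)"
    using sum.inter_filter[OF assms(2), of "\<lambda>_. f _" "\<lambda>e. _ \<in> e"]
    by (simp add: degree_def)
  finally show ?thesis .
qed

lemma regular_degree_handshake:
  assumes "simple_graph V E" "\<forall>v\<in>V. degree E v = k"
  shows "k * card V = 2 * card E"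
proof -
  have "(\<Sum>e\<in>E. \<Sum>u\<in>e. 1) = (\<Sum>v\<in>V. of_nat (degree E v) * (1::nat))"
    using assms(1) finite_edges_of_simple_graph
    by (intro sum_sum_edges_eq_sum_degree) (auto simp: simple_graph_def)
  then show ?thesis using assms by (simp add: simple_graph_def mult.commute)
qed

lemma card_mult_Suc_card_le_double_sum:
  fixes S :: "nat set"
  assumes "finite S" "0 \<notin> S"
  shows "card S * (card S + 1) \<le> 2 * \<Sum>S"
  using assms
proof (induction "card S" arbitrary: S)
  case 0
  then show ?case by simp
next
  case (Suc n)
  define m where "m = Max S"
  have "S \<noteq> {}" using Suc.hyps(2) by auto
  then have "m \<in> S" using Suc.prems(1) by (simp add: m_def)
  have "S \<subseteq> {1..m}"
    using Suc.prems by (auto simp: m_def Suc_le_eq intro!: Max_ge gr0I)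
  then have "card S \<le> m" using card_mono[of "{1..m}" S] by simp
  have "card (S - {m}) = n" using Suc.hyps(2) \<open>m \<in> S\<close> by simp
  then have "n * (n + 1) \<le> 2 * \<Sum>(S - {m})"
    using Suc.hyps(1)[of "S - {m}"] Suc.prems by auto
  moreover have "\<Sum>S = m + \<Sum>(S - {m})"
    using sum.remove[OF Suc.prems(1) \<open>m \<in> S\<close>, of id] by simp
  ultimately show ?case using \<open>card S \<le> m\<close> Suc.hyps(2)[symmetric] by simp
qed

lemma eq_initial_segment_if_below:
  fixes A B :: "nat set"
  assumes "A \<union> B = {1..n}" and "\<forall>a\<in>A. \<forall>b\<in>B. a < b"
  shows "A = {1..card A}"
proof -
  have "finite A" using assms(1) by (metis finite_Un finite_atLeastAtMost)
  have "A \<subseteq> {1..card A}"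
  proof
    fix m assume "m \<in> A"
    then have "m \<in> {1..n}" using assms(1) by blast
    have "{1..m} \<subseteq> A"
    proof
      fix j assume "j \<in> {1..m}"
      then have "j \<in> A \<union> B" using assms(1) \<open>m \<in> {1..n}\<close> by auto
      show "j \<in> A"
      proof (rule ccontr)
        assume "j \<notin> A"
        then have "m < j" using \<open>j \<in> A \<union> B\<close> \<open>m \<in> A\<close> assms(2) by blast
        then show False using \<open>j \<in> {1..m}\<close> by simp
      qed
    qed
    then have "card {1..m} \<le> card A" by (rule card_mono[OF \<open>finite A\<close>])
    then show "m \<in> {1..card A}" using \<open>m \<in> {1..n}\<close> by simp
  qed
  then show ?thesis by (rule card_subset_eq[OF finite_atLeastAtMost]) simp
qed

lemma bij_betw_pos:
  assumes "c_sequence V E y"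
  shows "bij_betw (pos V E y) (elems V E) {1..card V + card E}"
  using assms unfolding c_sequence_def pos_def by (simp add: bij_betw_the_inv_into)

lemma inj_on_pos_Inl:
  assumes "c_sequence V E y"
  shows "inj_on (\<lambda>v. pos V E y (Inl v)) V"
proof -
  have "inj_on (pos V E y) (elems V E)"
    using bij_betw_pos[OF assms] by (rule bij_betw_imp_inj_on)
  then show ?thesis unfolding elems_def by (auto simp: inj_on_def)
qed

lemma sum_elems:
  assumes "finite V" "finite E"
  shows "(\<Sum>z\<in>elems V E. f z) = (\<Sum>v\<in>V. f (Inl v)) + (\<Sum>e\<in>E. f (Inr e))"
proof -
  have "Inl ` V \<inter> Inr ` E = {}" by auto
  then show ?thesis
    unfolding elems_def using assms by (simp add: sum.union_disjoint sum.reindex)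
qed

lemma sum_pos_Inl_plus_sum_pos_Inr:
  assumes "simple_graph V E" "c_sequence V E y"
  shows "(\<Sum>v\<in>V. pos V E y (Inl v)) + (\<Sum>e\<in>E. pos V E y (Inr e)) = \<Sum>{1..card V + card E}"
proof -
  have "finite V" "finite E"
    using assms(1) finite_edges_of_simple_graph by (auto simp: simple_graph_def)
  then have "(\<Sum>v\<in>V. pos V E y (Inl v)) + (\<Sum>e\<in>E. pos V E y (Inr e)) = (\<Sum>z\<in>elems V E. pos V E y z)"
    by (simp add: sum_elems)
  also have "\<dots> = \<Sum>{1..card V + card E}"
    using sum.reindex_bij_betw[OF bij_betw_pos[OF assms(2)], of id] by simp
  finally show ?thesis .
qed

lemma cost_nonneg:
  assumes "c_sequence V E y"
  shows "0 \<le> cost V E y"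
  using assms unfolding c_sequence_def cost_def edge_cost_def
  by (auto intro!: sum_nonneg simp: less_imp_le)

lemma cost_eq_regular:
  assumes "simple_graph V E" "\<forall>v\<in>V. degree E v = k"
  shows "cost V E y =
    2 * int (\<Sum>e\<in>E. pos V E y (Inr e)) - int k * int (\<Sum>v\<in>V. pos V E y (Inl v))"
proof -
  have "finite V" "\<forall>e\<in>E. e \<subseteq> V" and card_edge: "\<forall>e\<in>E. card e = 2"
    using assms(1) by (auto simp: simple_graph_def)
  have vertex_terms: "(\<Sum>e\<in>E. \<Sum>u\<in>e. int (pos V E y (Inl u))) = int k * int (\<Sum>v\<in>V. pos V E y (Inl v))"
    using sum_sum_edges_eq_sum_degree[OF \<open>finite V\<close> finite_edges_of_simple_graph[OF assms(1)]
        \<open>\<forall>e\<in>E. e \<subseteq> V\<close>, of "\<lambda>u. int (pos V E y (Inl u))"] assms(2)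
    by (simp add: sum_distrib_left)
  have "cost V E y = (\<Sum>e\<in>E. 2 * int (pos V E y (Inr e))) - (\<Sum>e\<in>E. \<Sum>u\<in>e. int (pos V E y (Inl u)))"
    using card_edge by (simp add: cost_def edge_cost_def sum_subtractf sum.distrib[symmetric])
  then show ?thesis using vertex_terms by (simp add: sum_distrib_left)
qed

lemma double_vertex_pos_sum_ge:
  assumes "c_sequence V E y"
  shows "card V * (card V + 1) \<le> 2 * (\<Sum>v\<in>V. pos V E y (Inl v))"
proof -
  let ?S = "(\<lambda>v. pos V E y (Inl v)) ` V"
  have "?S \<subseteq> {1..card V + card E}"
    using bij_betw_imp_surj_on[OF bij_betw_pos[OF assms]] unfolding elems_def by auto
  then have "finite ?S" "0 \<notin> ?S" using finite_subset by auto
  then show ?thesis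
    using card_mult_Suc_card_le_double_sum[of ?S] inj_on_pos_Inl[OF assms]
    by (simp add: card_image sum.reindex)
qed

lemma double_vertex_pos_sum_of_easy:
  assumes "c_sequence V E y" "easy V E y"
  shows "2 * (\<Sum>v\<in>V. pos V E y (Inl v)) = card V * (card V + 1)"
proof -
  let ?A = "(\<lambda>v. pos V E y (Inl v)) ` V" and ?B = "(\<lambda>e. pos V E y (Inr e)) ` E"
  have "?A \<union> ?B = pos V E y ` elems V E" unfolding elems_def by auto
  also have "\<dots> = {1..card V + card E}"
    using bij_betw_pos[OF assms(1)] by (rule bij_betw_imp_surj_on)
  finally have "?A = {1..card ?A}"
    by (rule eq_initial_segment_if_below) (use assms(2) in \<open>auto simp: easy_def\<close>)
  moreover have "card ?A = card V" using inj_on_pos_Inl[OF assms(1)] by (rule card_image)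
  ultimately have "(\<Sum>v\<in>V. pos V E y (Inl v)) = \<Sum>{1..card V}"
    using inj_on_pos_Inl[OF assms(1)] by (metis sum.reindex_cong)
  then show ?thesis using double_gauss_sum_from_Suc_0[of "card V", where 'a = nat] by simp
qed

lemma double_cost_eq_regular:
  assumes "simple_graph V E" "\<forall>v\<in>V. degree E v = k" "c_sequence V E y"
  shows "2 * cost V E y = 2 * int (card E * (card V + card E))
    - int (k + 2) * (2 * int (\<Sum>v\<in>V. pos V E y (Inl v)) - int (card V * (card V + 1)))"
proof -
  define p q where "p = int (card V)" and "q = int (card E)"
  define SV SE where "SV = int (\<Sum>v\<in>V. pos V E y (Inl v))" and "SE = int (\<Sum>e\<in>E. pos V E y (Inr e))"
  have cost: "cost V E y = 2 * SE - int k * SV"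
    unfolding SV_def SE_def by (rule cost_eq_regular[OF assms(1,2)])
  have "2 * (SV + SE) = (p + q) * (p + q + 1)"
    using arg_cong[OF sum_pos_Inl_plus_sum_pos_Inr[OF assms(1,3)], of "\<lambda>n. 2 * int n"]
      double_gauss_sum_from_Suc_0[of "card V + card E", where 'a = int]
    by (simp add: SV_def SE_def p_def q_def)
  moreover have "int k * p * (p + 1) = 2 * q * (p + 1)"
    using regular_degree_handshake[OF assms(1,2)] unfolding p_def q_def
    by (metis of_nat_mult of_nat_numeral)
  ultimately have "2 * cost V E y = 2 * q * (p + q) - (int k + 2) * (2 * SV - p * (p + 1))"
    unfolding cost by (simp add: algebra_simps)
  then show ?thesis by (simp add: SV_def p_def q_def algebra_simps)
qed

lemma cost_le_regular:
  assumes "simple_graph V E" "\<forall>v\<in>V. degree E v = k" "c_sequence V E y"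
  shows "cost V E y \<le> int (card E * (card V + card E))"
proof -
  let ?D = "2 * int (\<Sum>v\<in>V. pos V E y (Inl v)) - int (card V * (card V + 1))"
  have "0 \<le> ?D" using double_vertex_pos_sum_ge[OF assms(3)] by linarith
  then have "0 \<le> int (k + 2) * ?D" by simp
  then show ?thesis using double_cost_eq_regular[OF assms] by linarith
qed

lemma cost_of_easy_regular:
  assumes "simple_graph V E" "\<forall>v\<in>V. degree E v = k" "c_sequence V E y" "easy V E y"
  shows "cost V E y = int (card E * (card V + card E))"
proof -
  have "2 * int (\<Sum>v\<in>V. pos V E y (Inl v)) = int (card V * (card V + 1))"
    using arg_cong[OF double_vertex_pos_sum_of_easy[OF assms(3,4)], of int] by simp
  then show ?thesis using double_cost_eq_regular[OF assms(1-3)] by simp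
qed

theorem theorem1:
  fixes V :: "'a set" and E :: "'a set set" and x :: "nat \<Rightarrow> 'a + 'a set"
  assumes "regular_graph V E"
    and "c_sequence V E x"
    and "easy V E x"
  shows "cost V E x = max_cost V E \<and>
         max_cost V E = int (card E * (card V + card E))"
proof -
  obtain k where graph: "simple_graph V E" and deg: "\<forall>v\<in>V. degree E v = k"
    using assms(1) unfolding regular_graph_def by blast
  let ?C = "int (card E * (card V + card E))"
  let ?costs = "{cost V E y | y. c_sequence V E y}"
  have cost_x: "cost V E x = ?C" by (rule cost_of_easy_regular[OF graph deg assms(2,3)])
  have "?costs \<subseteq> {0..?C}"
    using cost_nonneg cost_le_regular[OF graph deg] by auto
  then have "finite ?costs" by (rule finite_subset) simp
  moreover have "?C \<in> ?costs" unfolding cost_x[symmetric] using assms(2) by blast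
  ultimately have "max_cost V E = ?C" unfolding max_cost_def
    using cost_le_regular[OF graph deg] by (intro Max_eqI) auto
  then show ?thesis using cost_x by simp
qed

end
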